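(* There is a constant $C>0$ such that every $P\in\Gamma^{1/p}L^{p'}(\mathbb R^3;\mathbb R^3)\cap\Gamma^{1/q}L^{q'}(\mathbb R^3;\mathbb R^3)$ satisfies $P\in L^{6/5}(\mathbb R^3;\mathbb R^3)$ and $\|P\|_{6/5}\le C\big(\|\Gamma^{-1/p}P\|_{p'}+\|\Gamma^{-1/q}P\|_{q'}\big)$.
   Context: Standing parameters: $0<\alpha<3$, $2<p<6$, $\max\{2,6-2\alpha\}<q<\infty$, $p'=p/(p-1)$, $q'=q/(q-1)$, and $\Gamma:\mathbb R^3\to(0,\infty)$ is measurable with $0<c_0\le\Gamma(x)(1+|x|)^{\alpha}\le C_0<\infty$ for a.e. $x$. $\Gamma^{1/r}L^{r'}$ denotes measurable fields $P$ with $\Gamma^{-1/r}P\in L^{r'}$. *)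

theory Defs
  imports "HOL-Analysis.Analysis"
begin

definition in_Lp :: "real \<Rightarrow> (real^3 \<Rightarrow> 'b::euclidean_space) \<Rightarrow> bool" where
  "in_Lp r f \<longleftrightarrow> f \<in> borel_measurable lebesgue \<and>
     (\<integral>\<^sup>+ x. ennreal (norm (f x) powr r) \<partial>lebesgue) < \<infinity>"

definition Lp_norm :: "real \<Rightarrow> (real^3 \<Rightarrow> 'b::euclidean_space) \<Rightarrow> real" where
  "Lp_norm r f = (enn2real (\<integral>\<^sup>+ x. ennreal (norm (f x) powr r) \<partial>lebesgue)) powr (1 / r)"

definition conj_exp :: "real \<Rightarrow> real" where
  "conj_exp r = r / (r - 1)"

text \<open>Weighted space Gamma^(1/r) L^(r'): measurable fields P with Gamma^(-1/r) P in L^(r').\<close>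
definition in_weighted_Lp :: "(real^3 \<Rightarrow> real) \<Rightarrow> real \<Rightarrow> (real^3 \<Rightarrow> real^3) \<Rightarrow> bool" where
  "in_weighted_Lp \<Gamma> r P \<longleftrightarrow> P \<in> borel_measurable lebesgue \<and>
     in_Lp (conj_exp r) (\<lambda>x. \<Gamma> x powr (-1 / r) *\<^sub>R P x)"

end

theory Submission
  imports Defs
begin

(* Write u = |P x| and gamma = Gamma x.  Pointwise, u^(6/5) is controlled by the two weighted
   integrands (gamma^(-1/p) u)^p' and (gamma^(-1/q) u)^q' up to an integrable remainder.
   If q < 6, Young's inequality gives u^(6/5) <= gamma^(6/(6-q)) + (gamma^(-1/q) u)^q', and
   Gamma^(6/(6-q)) is integrable because Gamma <= C0 (1 + |x|)^(-alpha) and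
   6 alpha / (6 - q) > 3, which is exactly q > 6 - 2 alpha.
   If q >= 6, then q' <= 6/5 < p', so with g = u / gamma the power g^(6/5) lies below
   g^p' + g^q', and gamma g^p', gamma g^q' are the two weighted integrands; the leftover
   factor gamma^(1/5) is at most C0^(1/5).
   The remainder is not homogeneous in P, so the bound is applied to P / M for every M
   dominating both weighted norms. *)

lemma nn_integral_one_plus_abs_powr_finite:
  fixes g :: real
  assumes "1 < g"
  shows "(\<integral>\<^sup>+ t. ennreal ((1 + \<bar>t\<bar>) powr (-g)) \<partial>lborel) < \<infinity>"
proof -
  define tail where "tail = (\<lambda>x::real. ennreal (x powr (-g)) * indicator {1..} x)"
  define h where "h = (\<lambda>x. tail (1 + 1 * x))"
  have [measurable]: "tail \<in> borel_measurable borel" "h \<in> borel_measurable borel"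
    unfolding h_def tail_def by measurable
  have "((\<lambda>x::real. x powr (-g)) has_integral -(1 powr (-g+1)) / (-g+1)) {1..}"
    using has_integral_powr_to_inf[of "-g" 1] assms by simp
  then have "integral\<^sup>N lborel tail < \<infinity>"
    unfolding tail_def by (subst nn_integral_has_integral_lebesgue') auto
  moreover have "integral\<^sup>N lborel tail = ennreal \<bar>1\<bar> * integral\<^sup>N lborel h"
    unfolding h_def by (rule nn_integral_real_affine) auto
  ultimately have right: "integral\<^sup>N lborel h < \<infinity>"
    by simp
  have "integral\<^sup>N lborel h = ennreal \<bar>-1\<bar> * (\<integral>\<^sup>+ x. h (0 + (-1) * x) \<partial>lborel)"
    by (rule nn_integral_real_affine) auto
  with right have left: "(\<integral>\<^sup>+ x. h (- x) \<partial>lborel) < \<infinity>"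
    by simp
  have "(\<integral>\<^sup>+ t. ennreal ((1 + \<bar>t\<bar>) powr (-g)) \<partial>lborel) \<le> (\<integral>\<^sup>+ t. h t + h (- t) \<partial>lborel)"
    by (intro nn_integral_mono) (auto simp: h_def tail_def indicator_def abs_if add_increasing add_increasing2)
  also have "\<dots> = integral\<^sup>N lborel h + (\<integral>\<^sup>+ x. h (- x) \<partial>lborel)"
    by (rule nn_integral_add) auto
  also have "\<dots> < \<infinity>"
    using right left by simp
  finally show ?thesis .
qed

lemma nn_integral_one_plus_norm_powr_finite:
  fixes \<beta> :: real
  assumes "DIM('a) < \<beta>"
  shows "(\<integral>\<^sup>+ x. ennreal ((1 + norm (x::'a::euclidean_space)) powr (-\<beta>)) \<partial>lborel) < \<infinity>"
proof -
  define g where "g = \<beta> / DIM('a)"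
  have g: "1 < g"
    using assms by (simp add: g_def field_simps)
  obtain v where v: "(\<integral>\<^sup>+ t. ennreal ((1 + \<bar>t\<bar>) powr (-g)) \<partial>lborel) = ennreal v"
    using nn_integral_one_plus_abs_powr_finite[OF g] by (metis infinity_ennreal_def less_top_ennreal)
  have pointwise: "ennreal ((1 + norm x) powr (-\<beta>))
      \<le> (\<Prod>b\<in>Basis. ennreal ((1 + \<bar>x \<bullet> b\<bar>) powr (-g)))" for x :: 'a
  proof -
    have "0 < 1 + norm x"
      by (simp add: add_pos_nonneg)
    then have "(\<Prod>b\<in>(Basis::'a set). (1 + norm x) powr (-g)) = ((1 + norm x) powr (-g)) powr DIM('a)"
      by (simp add: powr_realpow)
    also have "\<dots> = (1 + norm x) powr (-\<beta>)"
      unfolding powr_powr g_def by simp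
    finally have "(1 + norm x) powr (-\<beta>) = (\<Prod>b\<in>(Basis::'a set). (1 + norm x) powr (-g))" ..
    also have "\<dots> \<le> (\<Prod>b\<in>Basis. (1 + \<bar>x \<bullet> b\<bar>) powr (-g))"
      using g Basis_le_norm[of _ x] by (intro prod_mono) (auto intro!: powr_mono2')
    finally show ?thesis
      by (simp add: prod_ennreal ennreal_leI)
  qed
  have "(\<integral>\<^sup>+ x. ennreal ((1 + norm (x::'a)) powr (-\<beta>)) \<partial>lborel)
      \<le> (\<integral>\<^sup>+ x. (\<Prod>b\<in>Basis. ennreal ((1 + \<bar>(x::'a) \<bullet> b\<bar>) powr (-g))) \<partial>lborel)"
    by (intro nn_integral_mono pointwise)
  also have "\<dots> = (\<Prod>b\<in>(Basis::'a set). \<integral>\<^sup>+ t. ennreal ((1 + \<bar>t\<bar>) powr (-g)) \<partial>lborel)"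
    by (rule nn_integral_lborel_prod) auto
  also have "\<dots> < \<infinity>"
    using v by (simp add: power_less_top_ennreal)
  finally show ?thesis .
qed

lemma weight_le_of_decay_bound:
  fixes \<Gamma> :: "'a::real_normed_vector \<Rightarrow> real"
  assumes "0 \<le> \<alpha>" "\<forall>x. 0 < \<Gamma> x" "AE x in M. \<Gamma> x * (1 + norm x) powr \<alpha> \<le> C"
  shows "AE x in M. \<Gamma> x \<le> C"
  using assms(3)
proof eventually_elim
  case (elim x)
  have "1 \<le> (1 + norm x) powr \<alpha>"
    using assms(1) by (intro ge_one_powr_ge_zero) auto
  then have "\<Gamma> x * 1 \<le> \<Gamma> x * (1 + norm x) powr \<alpha>"
    using assms(2) by (intro mult_left_mono) (auto simp: less_imp_le)
  with elim show ?case
    by simp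
qed

lemma nn_integral_weight_powr_finite:
  fixes \<Gamma> :: "'a::euclidean_space \<Rightarrow> real" and e \<alpha> C :: real
  assumes [measurable]: "\<Gamma> \<in> borel_measurable lebesgue" and pos: "\<forall>x. 0 < \<Gamma> x"
    and e: "0 < e" "DIM('a) < \<alpha> * e" and "0 < C"
    and decay: "AE x in lebesgue. \<Gamma> x * (1 + norm x) powr \<alpha> \<le> C"
  shows "(\<integral>\<^sup>+ x. ennreal (\<Gamma> x powr e) \<partial>lebesgue) < \<infinity>"
proof -
  have "AE x in lebesgue. ennreal (\<Gamma> x powr e) \<le> ennreal (C powr e) * ennreal ((1 + norm x) powr (-(\<alpha> * e)))"
    using decay
  proof eventually_elim
    case (elim x)
    have "0 < 1 + norm x"
      by (simp add: add_pos_nonneg)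
    then have "\<Gamma> x \<le> C * (1 + norm x) powr (-\<alpha>)"
      using elim by (simp add: powr_minus field_simps)
    then have "\<Gamma> x powr e \<le> (C * (1 + norm x) powr (-\<alpha>)) powr e"
      using pos e by (intro powr_mono2) (auto simp: less_imp_le)
    also have "\<dots> = C powr e * (1 + norm x) powr (-(\<alpha> * e))"
      by (simp add: powr_mult powr_powr)
    finally show ?case
      by (simp add: ennreal_mult'[symmetric] ennreal_leI)
  qed
  then have "(\<integral>\<^sup>+ x. ennreal (\<Gamma> x powr e) \<partial>lebesgue)
      \<le> (\<integral>\<^sup>+ x. ennreal (C powr e) * ennreal ((1 + norm (x::'a)) powr (-(\<alpha> * e))) \<partial>lebesgue)"
    by (rule nn_integral_mono_AE)
  also have "\<dots> = (\<integral>\<^sup>+ x. ennreal (C powr e) * ennreal ((1 + norm (x::'a)) powr (-(\<alpha> * e))) \<partial>lborel)"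
    by (rule nn_integral_completion)
  also have "\<dots> = ennreal (C powr e) * (\<integral>\<^sup>+ x. ennreal ((1 + norm (x::'a)) powr (-(\<alpha> * e))) \<partial>lborel)"
    by (rule nn_integral_cmult) measurable
  also have "\<dots> < \<infinity>"
    using nn_integral_one_plus_norm_powr_finite[of "\<alpha> * e", where 'a='a] e
    by (simp add: ennreal_mult_less_top)
  finally show ?thesis .
qed

lemma powr_weight_conj_exp:
  fixes r \<gamma> g :: real
  assumes "1 < r" "0 < \<gamma>" "0 \<le> g"
  shows "(\<gamma> powr (-1/r) * (\<gamma> * g)) powr (r/(r-1)) = \<gamma> * g powr (r/(r-1))"
proof -
  have "\<gamma> powr (-1/r) * \<gamma> = \<gamma> powr ((r-1)/r)"
    using assms powr_add[of \<gamma> "-1/r" 1] by (simp add: diff_divide_distrib)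
  then have "(\<gamma> powr (-1/r) * (\<gamma> * g)) powr (r/(r-1)) = (\<gamma> powr ((r-1)/r)) powr (r/(r-1)) * g powr (r/(r-1))"
    by (simp add: powr_mult mult.assoc[symmetric])
  also have "(\<gamma> powr ((r-1)/r)) powr (r/(r-1)) = \<gamma>"
    using assms by (simp add: powr_powr)
  finally show ?thesis .
qed

lemma six_fifths_powr_le_Young:
  fixes q \<gamma> u :: real
  assumes q: "1 < q" "q < 6" and "0 < \<gamma>" "0 \<le> u"
  shows "u powr (6/5) \<le> \<gamma> powr (6/(6-q)) + (\<gamma> powr (-1/q) * u) powr (q/(q-1))"
proof -
  define w where "w = \<gamma> powr (-1/q) * u"
  define s where "s = 5*q / (6*(q-1))"
  define s' where "s' = 5*q / (6-q)"
  have s: "1 < s" "1 < s'" "1/s' + 1/s = 1"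
    using q by (simp_all add: s_def s'_def field_simps)
  have "u = \<gamma> powr (1/q) * w"
    using assms by (simp add: w_def mult.assoc[symmetric] powr_add[symmetric])
  then have "u powr (6/5) = \<gamma> powr (6/(5*q)) * w powr (6/5)"
    using assms by (simp add: powr_mult powr_powr mult.commute)
  also have "\<dots> \<le> (\<gamma> powr (6/(5*q))) powr s' / s' + (w powr (6/5)) powr s / s"
    by (rule Youngs_inequality[OF s(2,1,3)]) auto
  also have "(\<gamma> powr (6/(5*q))) powr s' = \<gamma> powr (6/(6-q))"
    using q by (simp add: s'_def powr_powr field_simps)
  also have "6/5 * s = q/(q-1)"
    using q by (simp add: s_def field_simps)
  then have "(w powr (6/5)) powr s = (\<gamma> powr (-1/q) * u) powr (q/(q-1))"
    by (simp only: w_def powr_powr)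
  also have "\<gamma> powr (6/(6-q)) / s' + (\<gamma> powr (-1/q) * u) powr (q/(q-1)) / s
      \<le> \<gamma> powr (6/(6-q)) + (\<gamma> powr (-1/q) * u) powr (q/(q-1))"
    using s by (intro add_mono) (simp_all add: divide_le_eq mult_le_cancel_left1)
  finally show ?thesis .
qed

lemma six_fifths_powr_le_interpolation:
  fixes p q \<gamma> C u :: real
  assumes p: "1 < p" "p < 6" and q: "6 \<le> q" and \<gamma>: "0 < \<gamma>" "\<gamma> \<le> C" and "0 \<le> u"
  shows "u powr (6/5) \<le> C powr (1/5) *
           ((\<gamma> powr (-1/p) * u) powr (p/(p-1)) + (\<gamma> powr (-1/q) * u) powr (q/(q-1)))"
proof -
  define g where "g = u / \<gamma>"
  have g: "0 \<le> g" "u = \<gamma> * g"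
    using assms by (simp_all add: g_def)
  have split: "u powr (6/5) = \<gamma> powr (1/5) * (\<gamma> * g powr (6/5))"
    using \<gamma> powr_add[of \<gamma> "1/5" 1] by (simp add: g powr_mult)
  have "\<gamma> * g powr (6/5) \<le> \<gamma> * g powr (p/(p-1)) + \<gamma> * g powr (q/(q-1))"
  proof (cases "1 \<le> g")
    case True
    then have "g powr (6/5) \<le> g powr (p/(p-1))"
      using p by (intro powr_mono) (auto simp: field_simps)
    then show ?thesis
      using \<gamma> by (simp add: add_increasing2)
  next
    case False
    then have "g powr (6/5) \<le> g powr (q/(q-1))"
      using q g by (intro powr_mono') (auto simp: field_simps)
    then show ?thesis
      using \<gamma> by (simp add: add_increasing)
  qed
  also have "\<gamma> * g powr (p/(p-1)) = (\<gamma> powr (-1/p) * u) powr (p/(p-1))"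
    unfolding g(2) using p \<gamma> g by (intro powr_weight_conj_exp[symmetric]) auto
  also have "\<gamma> * g powr (q/(q-1)) = (\<gamma> powr (-1/q) * u) powr (q/(q-1))"
    unfolding g(2) using q \<gamma> g by (intro powr_weight_conj_exp[symmetric]) auto
  finally have interpolated: "\<gamma> * g powr (6/5)
      \<le> (\<gamma> powr (-1/p) * u) powr (p/(p-1)) + (\<gamma> powr (-1/q) * u) powr (q/(q-1))" .
  have "\<gamma> powr (1/5) \<le> C powr (1/5)"
    using \<gamma> by (intro powr_mono2) auto
  then show ?thesis
    unfolding split by (rule mult_mono[OF _ interpolated]) (use \<gamma> g in simp_all)
qed

lemma six_fifths_powr_le_weighted:
  fixes p q \<gamma> C u :: real
  assumes p: "1 < p" "p < 6" and q: "1 < q" and \<gamma>: "0 < \<gamma>" "\<gamma> \<le> C" and u: "0 \<le> u"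
  shows "u powr (6/5) \<le> max 1 (C powr (1/5)) * ((if q < 6 then \<gamma> powr (6/(6-q)) else 0)
           + (\<gamma> powr (-1/p) * u) powr (p/(p-1)) + (\<gamma> powr (-1/q) * u) powr (q/(q-1)))"
    (is "_ \<le> ?K * ?S")
proof -
  have S: "0 \<le> ?S"
    by simp
  have "u powr (6/5) \<le> ?S \<or> u powr (6/5) \<le> C powr (1/5) * ?S"
  proof (cases "q < 6")
    case True
    have "0 \<le> (\<gamma> powr (-1/p) * u) powr (p/(p-1))"
      by simp
    then have "u powr (6/5) \<le> \<gamma> powr (6/(6-q)) + (\<gamma> powr (-1/p) * u) powr (p/(p-1))
        + (\<gamma> powr (-1/q) * u) powr (q/(q-1))"
      using six_fifths_powr_le_Young[OF q True \<gamma>(1) u] by linarith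
    with True show ?thesis
      by simp
  next
    case False
    then show ?thesis
      using six_fifths_powr_le_interpolation[OF p _ \<gamma> u, of q] by auto
  qed
  moreover have "?S \<le> ?K * ?S" "C powr (1/5) * ?S \<le> ?K * ?S"
    using mult_right_mono[OF _ S, of 1 ?K] mult_right_mono[OF _ S, of "C powr (1/5)" ?K] by simp_all
  ultimately show ?thesis
    by linarith
qed

lemma Lp_norm_nonneg: "0 \<le> Lp_norm r f"
  by (simp add: Lp_norm_def)

lemma nn_integral_normalized_powr_le_one:
  fixes f :: "real^3 \<Rightarrow> 'b::euclidean_space" and r M :: real
  assumes f: "in_Lp r f" and "0 < r" "0 < M" "Lp_norm r f \<le> M"
  shows "(\<integral>\<^sup>+ x. ennreal ((norm (f x) / M) powr r) \<partial>lebesgue) \<le> 1"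
proof -
  have [measurable]: "f \<in> borel_measurable lebesgue"
    using f by (simp add: in_Lp_def)
  obtain I where I: "(\<integral>\<^sup>+ x. ennreal (norm (f x) powr r) \<partial>lebesgue) = ennreal I" "0 \<le> I"
    using f unfolding in_Lp_def by (metis infinity_ennreal_def less_top_ennreal)
  have "I powr (1/r) \<le> M"
    using assms I by (simp add: Lp_norm_def)
  then have "(I powr (1/r)) powr r \<le> M powr r"
    using assms I by (intro powr_mono2) auto
  then have IM: "I \<le> M powr r"
    using assms I by (simp add: powr_powr)
  have "(\<integral>\<^sup>+ x. ennreal ((norm (f x) / M) powr r) \<partial>lebesgue)
      = (\<integral>\<^sup>+ x. ennreal (norm (f x) powr r) * ennreal (1 / M powr r) \<partial>lebesgue)"
    using assms by (intro nn_integral_cong) (simp add: powr_divide ennreal_mult'[symmetric])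
  also have "\<dots> = ennreal I * ennreal (1 / M powr r)"
    by (subst nn_integral_multc) (auto simp: I)
  also have "\<dots> = ennreal (I / M powr r)"
    using I by (simp add: ennreal_mult'[symmetric])
  also have "\<dots> \<le> 1"
    using IM assms by simp
  finally show ?thesis .
qed

lemma Lp_norm_le_of_nn_integral_bound:
  fixes f :: "real^3 \<Rightarrow> 'b::euclidean_space" and r c N :: real
  assumes [measurable]: "f \<in> borel_measurable lebesgue" and r: "0 < r" and "0 \<le> c" "0 \<le> N"
    and bound: "\<And>M. 0 < M \<Longrightarrow> N \<le> M \<Longrightarrow>
      (\<integral>\<^sup>+ x. ennreal (norm (f x) powr r) \<partial>lebesgue) \<le> ennreal (c * M powr r)"
  shows "in_Lp r f \<and> Lp_norm r f \<le> c powr (1/r) * N"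
proof
  have "(\<integral>\<^sup>+ x. ennreal (norm (f x) powr r) \<partial>lebesgue) \<le> ennreal (c * (N + 1) powr r)"
    using assms by (intro bound) auto
  also have "\<dots> < \<infinity>"
    by simp
  finally show "in_Lp r f"
    by (simp add: in_Lp_def)
  have le: "Lp_norm r f \<le> c powr (1/r) * M" if "0 < M" "N \<le> M" for M
  proof -
    have "enn2real (\<integral>\<^sup>+ x. ennreal (norm (f x) powr r) \<partial>lebesgue) \<le> c * M powr r"
      using bound[OF that] assms by (intro enn2real_leI) auto
    then have "Lp_norm r f \<le> (c * M powr r) powr (1/r)"
      unfolding Lp_norm_def using r by (intro powr_mono2) auto
    also have "\<dots> = c powr (1/r) * M"
      using assms that by (simp add: powr_mult powr_powr)
    finally show ?thesis .
  qed
  show "Lp_norm r f \<le> c powr (1/r) * N"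
  proof (rule field_le_epsilon)
    fix e :: real
    assume "0 < e"
    let ?c = "c powr (1/r)"
    have "0 < e / (?c + 1)"
      using \<open>0 < e\<close> by (simp add: add_nonneg_pos)
    then have "Lp_norm r f \<le> ?c * (N + e / (?c + 1))"
      using assms by (intro le) linarith+
    also have "\<dots> \<le> ?c * N + e"
      using \<open>0 < e\<close> add_pos_nonneg[OF zero_less_one powr_ge_zero[of c "1/r"]]
      by (simp add: distrib_left divide_le_eq algebra_simps)
    finally show "Lp_norm r f \<le> c powr (1/r) * N + e" .
  qed
qed

lemma nn_integral_six_fifths_le_weighted_norms:
  fixes \<Gamma> :: "real^3 \<Rightarrow> real" and P :: "real^3 \<Rightarrow> real^3" and p q C M :: real
  assumes p: "1 < p" "p < 6" and q: "1 < q"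
    and [measurable]: "\<Gamma> \<in> borel_measurable lebesgue" "P \<in> borel_measurable lebesgue"
    and pos: "\<forall>x. 0 < \<Gamma> x" and bound: "AE x in lebesgue. \<Gamma> x \<le> C"
    and F\<^sub>p: "in_Lp (conj_exp p) (\<lambda>x. \<Gamma> x powr (-1/p) *\<^sub>R P x)"
    and F\<^sub>q: "in_Lp (conj_exp q) (\<lambda>x. \<Gamma> x powr (-1/q) *\<^sub>R P x)"
    and M: "0 < M" "Lp_norm (conj_exp p) (\<lambda>x. \<Gamma> x powr (-1/p) *\<^sub>R P x) \<le> M"
      "Lp_norm (conj_exp q) (\<lambda>x. \<Gamma> x powr (-1/q) *\<^sub>R P x) \<le> M"
  shows "(\<integral>\<^sup>+ x. ennreal (norm (P x) powr (6/5)) \<partial>lebesgue)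
    \<le> ennreal (max 1 (C powr (1/5)) * M powr (6/5))
       * ((\<integral>\<^sup>+ x. ennreal (if q < 6 then \<Gamma> x powr (6/(6-q)) else 0) \<partial>lebesgue) + 2)"
proof -
  define K where "K = max 1 (C powr (1/5))"
  define H where "H = (\<lambda>x. if q < 6 then \<Gamma> x powr (6/(6-q)) else 0)"
  define A where "A = (\<lambda>x. ennreal ((norm (\<Gamma> x powr (-1/p) *\<^sub>R P x) / M) powr conj_exp p))"
  define B where "B = (\<lambda>x. ennreal ((norm (\<Gamma> x powr (-1/q) *\<^sub>R P x) / M) powr conj_exp q))"
  have [measurable]: "H \<in> borel_measurable lebesgue" "A \<in> borel_measurable lebesgue"
    "B \<in> borel_measurable lebesgue"
    unfolding H_def A_def B_def by measurable
  have "AE x in lebesgue. ennreal (norm (P x) powr (6/5))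
      \<le> ennreal (K * M powr (6/5)) * (ennreal (H x) + A x + B x)"
    using bound
  proof eventually_elim
    case (elim x)
    have "(norm (P x) / M) powr (6/5) \<le> K * (H x
        + (\<Gamma> x powr (-1/p) * (norm (P x) / M)) powr (p/(p-1))
        + (\<Gamma> x powr (-1/q) * (norm (P x) / M)) powr (q/(q-1)))"
      unfolding K_def H_def using p q pos elim M by (intro six_fifths_powr_le_weighted) auto
    then have "norm (P x) powr (6/5) \<le> K * M powr (6/5) * (H x
        + (norm (\<Gamma> x powr (-1/p) *\<^sub>R P x) / M) powr conj_exp p
        + (norm (\<Gamma> x powr (-1/q) *\<^sub>R P x) / M) powr conj_exp q)"
      using M pos by (simp add: powr_divide conj_exp_def field_simps)
    moreover have "0 \<le> H x" "0 \<le> K"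
      by (simp_all add: H_def K_def)
    ultimately show ?case
      unfolding A_def B_def
      by (simp add: ennreal_mult'[symmetric] ennreal_plus[symmetric] ennreal_leI del: ennreal_plus)
  qed
  then have "(\<integral>\<^sup>+ x. ennreal (norm (P x) powr (6/5)) \<partial>lebesgue)
      \<le> (\<integral>\<^sup>+ x. ennreal (K * M powr (6/5)) * (ennreal (H x) + A x + B x) \<partial>lebesgue)"
    by (rule nn_integral_mono_AE)
  also have "\<dots> = ennreal (K * M powr (6/5))
      * ((\<integral>\<^sup>+ x. ennreal (H x) \<partial>lebesgue) + integral\<^sup>N lebesgue A + integral\<^sup>N lebesgue B)"
    by (simp add: nn_integral_cmult nn_integral_add)
  also have "\<dots> \<le> ennreal (K * M powr (6/5)) * ((\<integral>\<^sup>+ x. ennreal (H x) \<partial>lebesgue) + 1 + 1)"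
    unfolding A_def B_def using p q M conj_exp_def
    by (intro mult_left_mono add_mono order.refl nn_integral_normalized_powr_le_one F\<^sub>p F\<^sub>q) auto
  finally show ?thesis
    by (simp add: K_def H_def add.assoc one_add_one)
qed

lemma in_Lp_six_fifths_of_weighted:
  fixes \<Gamma> :: "real^3 \<Rightarrow> real" and P :: "real^3 \<Rightarrow> real^3" and p q C I :: real
  assumes p: "1 < p" "p < 6" and q: "1 < q"
    and [measurable]: "\<Gamma> \<in> borel_measurable lebesgue"
    and pos: "\<forall>x. 0 < \<Gamma> x" and bound: "AE x in lebesgue. \<Gamma> x \<le> C"
    and I: "(\<integral>\<^sup>+ x. ennreal (if q < 6 then \<Gamma> x powr (6/(6-q)) else 0) \<partial>lebesgue) = ennreal I"
      "0 \<le> I"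
    and P: "in_weighted_Lp \<Gamma> p P" "in_weighted_Lp \<Gamma> q P"
  shows "in_Lp (6/5) P \<and> Lp_norm (6/5) P \<le> (max 1 (C powr (1/5)) * (I + 2)) powr (5/6) *
      (Lp_norm (conj_exp p) (\<lambda>x. \<Gamma> x powr (-1 / p) *\<^sub>R P x)
       + Lp_norm (conj_exp q) (\<lambda>x. \<Gamma> x powr (-1 / q) *\<^sub>R P x))"
proof -
  define c where "c = max 1 (C powr (1/5)) * (I + 2)"
  define N where "N = Lp_norm (conj_exp p) (\<lambda>x. \<Gamma> x powr (-1 / p) *\<^sub>R P x)
    + Lp_norm (conj_exp q) (\<lambda>x. \<Gamma> x powr (-1 / q) *\<^sub>R P x)"
  have [measurable]: "P \<in> borel_measurable lebesgue"
    and F: "in_Lp (conj_exp p) (\<lambda>x. \<Gamma> x powr (-1/p) *\<^sub>R P x)"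
      "in_Lp (conj_exp q) (\<lambda>x. \<Gamma> x powr (-1/q) *\<^sub>R P x)"
    using P by (simp_all add: in_weighted_Lp_def)
  have "(\<integral>\<^sup>+ x. ennreal (norm (P x) powr (6/5)) \<partial>lebesgue) \<le> ennreal (c * M powr (6/5))"
    if "0 < M" "N \<le> M" for M
  proof -
    have "Lp_norm (conj_exp p) (\<lambda>x. \<Gamma> x powr (-1 / p) *\<^sub>R P x) \<le> M"
      using order_trans[OF add_increasing2[OF Lp_norm_nonneg order.refl] that(2)[unfolded N_def]] .
    moreover have "Lp_norm (conj_exp q) (\<lambda>x. \<Gamma> x powr (-1 / q) *\<^sub>R P x) \<le> M"
      using order_trans[OF add_increasing[OF Lp_norm_nonneg order.refl] that(2)[unfolded N_def]] .
    ultimately have "(\<integral>\<^sup>+ x. ennreal (norm (P x) powr (6/5)) \<partial>lebesgue)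
        \<le> ennreal (max 1 (C powr (1/5)) * M powr (6/5)) * (ennreal I + 2)"
      using nn_integral_six_fifths_le_weighted_norms[OF p q _ _ pos bound F \<open>0 < M\<close>] I
      by simp
    also have "ennreal I + 2 = ennreal (I + 2)"
      using I by simp
    also have "ennreal (max 1 (C powr (1/5)) * M powr (6/5)) * ennreal (I + 2)
        = ennreal (c * M powr (6/5))"
      using I by (subst ennreal_mult'[symmetric]) (simp_all add: c_def mult_ac)
    finally show ?thesis .
  qed
  then have "in_Lp (6/5) P \<and> Lp_norm (6/5) P \<le> c powr (1/(6/5)) * N"
    using I by (intro Lp_norm_le_of_nn_integral_bound) (auto simp: c_def N_def Lp_norm_nonneg)
  then show ?thesis
    by (simp add: c_def N_def)
qed

theorem mainTheorem10:
  fixes \<alpha> p q c\<^sub>0 C\<^sub>0 :: real and \<Gamma> :: "real^3 \<Rightarrow> real"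
  assumes "0 < \<alpha>" "\<alpha> < 3"
    and "2 < p" "p < 6"
    and "max 2 (6 - 2 * \<alpha>) < q"
    and "\<Gamma> \<in> borel_measurable lebesgue"
    and "\<forall>x. 0 < \<Gamma> x"
    and "0 < c\<^sub>0" "c\<^sub>0 \<le> C\<^sub>0"
    and "AE x in lebesgue. c\<^sub>0 \<le> \<Gamma> x * (1 + norm x) powr \<alpha> \<and> \<Gamma> x * (1 + norm x) powr \<alpha> \<le> C\<^sub>0"
  shows "\<exists>C>0. \<forall>P :: real^3 \<Rightarrow> real^3.
           in_weighted_Lp \<Gamma> p P \<and> in_weighted_Lp \<Gamma> q P \<longrightarrow>
             in_Lp (6/5) P \<and>
             Lp_norm (6/5) P \<le> C * (Lp_norm (conj_exp p) (\<lambda>x. \<Gamma> x powr (-1 / p) *\<^sub>R P x)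
                                     + Lp_norm (conj_exp q) (\<lambda>x. \<Gamma> x powr (-1 / q) *\<^sub>R P x))"
proof -
  have decay: "AE x in lebesgue. \<Gamma> x * (1 + norm x) powr \<alpha> \<le> C\<^sub>0"
    using assms(10) by (rule AE_mp) auto
  have "(\<integral>\<^sup>+ x. ennreal (if q < 6 then \<Gamma> x powr (6/(6-q)) else 0) \<partial>lebesgue) < \<infinity>"
  proof (cases "q < 6")
    case True
    have "3 < \<alpha> * (6/(6-q))"
      using True assms(5) by (simp add: field_simps)
    with True show ?thesis
      using nn_integral_weight_powr_finite[OF assms(6,7) _ _ _ decay] assms(8,9) by simp
  qed simp
  then obtain I where I: "(\<integral>\<^sup>+ x. ennreal (if q < 6 then \<Gamma> x powr (6/(6-q)) else 0) \<partial>lebesgue)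
      = ennreal I" "0 \<le> I"
    by (metis infinity_ennreal_def less_top_ennreal)
  have "1 < p" "p < 6" "1 < q"
    using assms(3-5) by auto
  note embedding = in_Lp_six_fifths_of_weighted[OF this assms(6,7)
      weight_le_of_decay_bound[OF less_imp_le[OF assms(1)] assms(7) decay] I]
  have "0 < (max 1 (C\<^sub>0 powr (1/5)) * (I + 2)) powr (5/6)"
    using I by (simp add: add_nonneg_pos)
  with embedding show ?thesis
    by blast
qed

end
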